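(* Let $G$ be a terrain visibility graph. Then for every integer $k \ge 6$, $G$ contains no induced subgraph isomorphic to the complement $\overline{C_k}$ of the cycle on $k$ vertices (i.e., $G$ contains no antihole of size at least $6$).
   Context: A (1.5-dimensional) terrain is an $x$-monotone polygonal chain in the plane given by a finite set $V$ of terrain vertices with pairwise distinct $x$-coordinates. Write $p<q$ if $p^x<q^x$. The terrain visibility graph has vertex set $V$, and for $p<q$ the pair $\{p,q\}$ is an edge if and only if every terrain vertex $r$ with $p<r<q$ satisfies $r^y < p^y + (q^y-p^y)\frac{r^x-p^x}{q^x-p^x}$ (i.e., no vertex between them lies on or above the segment $pq$). A graph is a terrain visibility graph if it is isomorphic to the visibility graph of some terrain. *)

theory Defs
  imports Main "HOL-Library.Product_Plus" Complex_Main
begin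

text \<open>A terrain is given by its finite set of vertices, points in the plane
  (x-coordinate = fst, y-coordinate = snd) with pairwise distinct x-coordinates.\<close>
definition terrain :: "(real \<times> real) set \<Rightarrow> bool" where
  "terrain V \<longleftrightarrow> finite V \<and> inj_on fst V"

definition sees :: "(real \<times> real) set \<Rightarrow> real \<times> real \<Rightarrow> real \<times> real \<Rightarrow> bool" where
  "sees V p q \<longleftrightarrow> (\<forall>r\<in>V. fst p < fst r \<and> fst r < fst q \<longrightarrow>
      snd r < snd p + (snd q - snd p) * (fst r - fst p) / (fst q - fst p))"

definition tvis_edge :: "(real \<times> real) set \<Rightarrow> real \<times> real \<Rightarrow> real \<times> real \<Rightarrow> bool" where
  "tvis_edge V p q \<longleftrightarrow> p \<in> V \<and> q \<in> V \<and>
     ((fst p < fst q \<and> sees V p q) \<or> (fst q < fst p \<and> sees V q p))"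

definition terrain_visibility_graph :: "'a set \<Rightarrow> ('a \<Rightarrow> 'a \<Rightarrow> bool) \<Rightarrow> bool" where
  "terrain_visibility_graph W E \<longleftrightarrow>
     (\<exists>T f. terrain T \<and> bij_betw f W T \<and>
        (\<forall>u\<in>W. \<forall>v\<in>W. u \<noteq> v \<longrightarrow> (E u v \<longleftrightarrow> tvis_edge T (f u) (f v))))"

definition cycle_adj :: "nat \<Rightarrow> nat \<Rightarrow> nat \<Rightarrow> bool" where
  "cycle_adj k i j \<longleftrightarrow> j = Suc i mod k \<or> i = Suc j mod k"

definition has_induced_antihole :: "'a set \<Rightarrow> ('a \<Rightarrow> 'a \<Rightarrow> bool) \<Rightarrow> nat \<Rightarrow> bool" where
  "has_induced_antihole W E k \<longleftrightarrow>
     (\<exists>h. inj_on h {0..<k} \<and> h ` {0..<k} \<subseteq> W \<and>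
        (\<forall>i<k. \<forall>j<k. i \<noteq> j \<longrightarrow> (E (h i) (h j) \<longleftrightarrow> \<not> cycle_adj k i j)))"

end

theory Submission
  imports Defs "HOL-Number_Theory.Cong"
begin

text \<open>Two properties of terrain visibility graphs, with vertices ordered by x-coordinate, carry
  the argument: if a < b < c < d and ac, bd are edges then so is ad (the crossing property), and
  a, b, c, d never span the induced 4-cycle a-b-c-d-a. Together they show that in an induced
  4-cycle the vertex opposite to the leftmost vertex lies left of the two remaining ones.

  Number the antihole cyclically v 0, ..., v (k-1) with v 0 leftmost and, after a reflection,
  v 1 left of v (k-1). For k \<ge> 6 the induced 4-cycles v 0, v 2, v (k-1), v 3 and
  v 0, v (k-2), v 1, v (k-3) put v (k-1) left of v 2 and v 1 left of v (k-2); the crossing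
  property then gives v 1 < v (k-1) < v (k-2), and whichever of v 2 and v (k-2) comes first,
  one of the two properties fails for v 1, v (k-1), v 2, v (k-2).\<close>

section \<open>Terrain geometry\<close>

definition slope :: "real \<times> real \<Rightarrow> real \<times> real \<Rightarrow> real" where
  "slope p q = (snd q - snd p) / (fst q - fst p)"

definition below_segment :: "real \<times> real \<Rightarrow> real \<times> real \<Rightarrow> real \<times> real \<Rightarrow> bool" where
  "below_segment p q r \<longleftrightarrow> snd r < snd p + (snd q - snd p) * (fst r - fst p) / (fst q - fst p)"

lemma sees_iff_below_segment:
  "sees V p q \<longleftrightarrow> (\<forall>r\<in>V. fst p < fst r \<and> fst r < fst q \<longrightarrow> below_segment p q r)"
  unfolding sees_def below_segment_def by simp

lemma below_segment_iff_slope: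
  assumes "fst p < fst r" "fst r < fst q"
  shows "below_segment p q r \<longleftrightarrow> slope p r < slope p q"
    and "below_segment p q r \<longleftrightarrow> slope p q < slope r q"
    and "below_segment p q r \<longleftrightarrow> slope p r < slope r q"
proof -
  obtain a b c d e f where pts: "p = (a, b)" "r = (c, d)" "q = (e, f)"
    by (metis prod.exhaust)
  have "a < c" "c < e" using assms pts by auto
  then show "below_segment p q r \<longleftrightarrow> slope p r < slope p q"
    and "below_segment p q r \<longleftrightarrow> slope p q < slope r q"
    and "below_segment p q r \<longleftrightarrow> slope p r < slope r q"
    unfolding below_segment_def slope_def pts by (simp_all add: field_simps)
qed

lemma tvis_edge_sym: "tvis_edge V p q \<longleftrightarrow> tvis_edge V q p"
  unfolding tvis_edge_def by auto

lemma tvis_edge_iff_sees: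
  "fst p < fst q \<Longrightarrow> tvis_edge V p q \<longleftrightarrow> p \<in> V \<and> q \<in> V \<and> sees V p q"
  unfolding tvis_edge_def by auto

lemma tvis_edge_fst_neq: "tvis_edge V p q \<Longrightarrow> fst p \<noteq> fst q"
  unfolding tvis_edge_def by auto

locale terrain_graph =
  fixes T :: "(real \<times> real) set"
  assumes terrain: "terrain T"
begin

lemma inj_on_fst: "inj_on fst T"
  using terrain unfolding terrain_def by simp

lemma eq_if_fst_eq: "p \<in> T \<Longrightarrow> q \<in> T \<Longrightarrow> fst p = fst q \<Longrightarrow> p = q"
  using inj_on_fst unfolding inj_on_def by blast

lemma sees_crossing:
  assumes "b \<in> T" "c \<in> T"
    and ord: "fst a < fst b" "fst b < fst c" "fst c < fst d"
    and ac: "sees T a c" and bd: "sees T b d"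
  shows "sees T a d"
  unfolding sees_iff_below_segment
proof (intro ballI impI)
  have "below_segment a c b" "below_segment b d c"
    using assms by (auto simp: sees_iff_below_segment)
  then have slopes: "slope a b < slope a c" "slope a c < slope b c"
      "slope b c < slope b d" "slope b d < slope c d"
    using ord below_segment_iff_slope[of a b c] below_segment_iff_slope[of b c d] by auto
  then have "below_segment a d c"
    using ord below_segment_iff_slope(3)[of a c d] by auto
  then have ac_ad: "slope a c < slope a d"
    using ord below_segment_iff_slope(1)[of a c d] by auto
  then have "below_segment a d b"
    using ord slopes below_segment_iff_slope(1)[of a b d] by auto
  then have ad_bd: "slope a d < slope b d"
    using ord below_segment_iff_slope(2)[of a b d] by auto
  fix r assume r: "r \<in> T" "fst a < fst r \<and> fst r < fst d"
  consider "fst r < fst c" | "fst r = fst c" | "fst c < fst r" by linarith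
  then show "below_segment a d r"
  proof cases
    case 1
    then have "below_segment a c r" using ac r unfolding sees_iff_below_segment by auto
    then have "slope a r < slope a c" using below_segment_iff_slope(1)[of a r c] r 1 by auto
    then show ?thesis using below_segment_iff_slope(1)[of a r d] r ac_ad by auto
  next
    case 2
    then show ?thesis using \<open>below_segment a d c\<close> eq_if_fst_eq r \<open>c \<in> T\<close> by metis
  next
    case 3
    then have "below_segment b d r" using bd r ord unfolding sees_iff_below_segment by auto
    then have "slope b d < slope r d" using below_segment_iff_slope(2)[of b r d] r 3 ord by auto
    then show ?thesis using below_segment_iff_slope(2)[of a r d] r ad_bd by auto
  qed
qed

lemma not_sees_blocked_by_middle:
  assumes "b \<in> T"
    and ord: "fst a < fst b" "fst b < fst c"
    and ab: "sees T a b" and bc: "sees T b c" and "\<not> sees T a c"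
  shows "\<not> below_segment a c b"
proof -
  obtain r where r: "r \<in> T" "fst a < fst r" "fst r < fst c" "\<not> below_segment a c r"
    using \<open>\<not> sees T a c\<close> unfolding sees_iff_below_segment by auto
  consider "fst r < fst b" | "fst r = fst b" | "fst b < fst r" by linarith
  then show ?thesis
  proof cases
    case 1
    have "below_segment a b r" using ab r 1 unfolding sees_iff_below_segment by auto
    then have "slope a r < slope a b" using below_segment_iff_slope(1)[of a r b] r 1 by auto
    moreover have "slope a c \<le> slope a r" using below_segment_iff_slope(1)[of a r c] r by auto
    ultimately show ?thesis using below_segment_iff_slope(1)[of a b c] ord by auto
  next
    case 2
    then show ?thesis using r eq_if_fst_eq \<open>b \<in> T\<close> by metis
  next
    case 3
    have "below_segment b c r" using bc r 3 unfolding sees_iff_below_segment by auto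
    then have "slope b c < slope r c" using below_segment_iff_slope(2)[of b r c] r 3 by auto
    moreover have "slope r c \<le> slope a c" using below_segment_iff_slope(2)[of a r c] r by auto
    ultimately show ?thesis using below_segment_iff_slope(2)[of a b c] ord by auto
  qed
qed

lemma sees_no_ordered_C4:
  assumes "b \<in> T" "c \<in> T"
    and ord: "fst a < fst b" "fst b < fst c" "fst c < fst d"
    and "sees T a b" "sees T b c" "sees T c d" "sees T a d"
    and "\<not> sees T a c" "\<not> sees T b d"
  shows False
proof -
  have "\<not> below_segment a c b" "\<not> below_segment b d c"
    using not_sees_blocked_by_middle assms by blast+
  then have up: "slope a c \<le> slope a b" "slope b c \<le> slope a c"
      "slope b d \<le> slope b c" "slope c d \<le> slope b d"
    using ord below_segment_iff_slope[of a b c] below_segment_iff_slope[of b c d] by auto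
  have "below_segment a d b" "below_segment a d c"
    using assms unfolding sees_iff_below_segment by auto
  then have down: "slope a b < slope a d" "slope a d < slope c d"
    using ord below_segment_iff_slope(1)[of a b d] below_segment_iff_slope(2)[of a c d] by auto
  have "slope a d < slope c d" by (fact down(2))
  also have "\<dots> \<le> slope b d" by (fact up(4))
  also have "\<dots> \<le> slope b c" by (fact up(3))
  also have "\<dots> \<le> slope a c" by (fact up(2))
  also have "\<dots> \<le> slope a b" by (fact up(1))
  also have "\<dots> < slope a d" by (fact down(1))
  finally show False .
qed

lemma tvis_edge_crossing:
  assumes "fst a < fst b" "fst b < fst c" "fst c < fst d"
    and "tvis_edge T a c" "tvis_edge T b d"
  shows "tvis_edge T a d"
  using assms sees_crossing[of b c a d] tvis_edge_iff_sees[of _ _ T] by auto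

lemma no_ordered_induced_C4:
  assumes "fst a < fst b" "fst b < fst c" "fst c < fst d"
    and "tvis_edge T a b" "tvis_edge T b c" "tvis_edge T c d" "tvis_edge T a d"
    and "\<not> tvis_edge T a c" "\<not> tvis_edge T b d"
  shows False
  using assms sees_no_ordered_C4[of b c a d] tvis_edge_iff_sees[of _ _ T] by auto

lemma induced_C4_opposite_left:
  assumes "tvis_edge T p r" "tvis_edge T r q" "tvis_edge T q s" "tvis_edge T s p"
    and "\<not> tvis_edge T p q" "\<not> tvis_edge T r s"
    and "fst p < fst q" "fst p < fst r" "fst p < fst s" "fst r \<noteq> fst s"
  shows "fst q < fst r"
proof (rule ccontr)
  assume "\<not> fst q < fst r"
  with tvis_edge_fst_neq[OF \<open>tvis_edge T r q\<close>] have rq: "fst r < fst q" by simp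
  have "fst q \<noteq> fst s" using tvis_edge_fst_neq[OF \<open>tvis_edge T q s\<close>] .
  then consider "fst s < fst r" | "fst r < fst s" "fst s < fst q" | "fst q < fst s"
    using \<open>fst r \<noteq> fst s\<close> by linarith
  then show False
  proof cases
    case 1
    then show False using tvis_edge_crossing[of p s r q] assms rq tvis_edge_sym by metis
  next
    case 2
    then show False using tvis_edge_crossing[of p r s q] assms rq tvis_edge_sym by metis
  next
    case 3
    then show False using no_ordered_induced_C4[of p r q s] assms rq tvis_edge_sym by metis
  qed
qed

end

section \<open>Symmetries of the cycle\<close>

lemma cycle_adj_iff_cong:
  assumes "i < k" "j < k"
  shows "cycle_adj k i j \<longleftrightarrow> [int j = int i + 1] (mod int k) \<or> [int i = int j + 1] (mod int k)"
proof -
  have "j = Suc i mod k \<longleftrightarrow> [int j = int i + 1] (mod int k)" if "j < k" for i j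
  proof -
    have "[int j = int i + 1] (mod int k) \<longleftrightarrow> [j = Suc i] (mod k)"
      by (simp add: cong_int_iff [symmetric] add.commute)
    also have "\<dots> \<longleftrightarrow> j = Suc i mod k"
      using that by (simp add: cong_def)
    finally show ?thesis by simp
  qed
  then show ?thesis unfolding cycle_adj_def using assms by blast
qed

lemma cong_add_one_iff:
  fixes x y x' y' n :: int
  assumes "[x = x'] (mod n)" "[y = y'] (mod n)"
  shows "[x = y + 1] (mod n) \<longleftrightarrow> [x' = y' + 1] (mod n)"
  using assms by (meson cong_add cong_refl cong_sym cong_trans)

lemma rotate_index_cong: "[int ((c + i) mod k) = int c + int i] (mod int k)"
  by (simp add: of_nat_mod)

lemma reflect_index_cong: "i \<le> k \<Longrightarrow> [int ((k - i) mod k) = - int i] (mod int k)"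
  by (simp add: of_nat_mod of_nat_diff cong_def mod_diff_left_eq)

lemma cycle_adj_rotate:
  assumes "a < k" "b < k"
  shows "cycle_adj k ((c + a) mod k) ((c + b) mod k) \<longleftrightarrow> cycle_adj k a b"
proof -
  have "[int ((c + y) mod k) = int ((c + x) mod k) + 1] (mod int k) \<longleftrightarrow>
      [int y = int x + 1] (mod int k)" for x y
    using cong_add_one_iff[OF rotate_index_cong rotate_index_cong] cong_add_lcancel by (metis add.assoc)
  then show ?thesis using assms by (simp add: cycle_adj_iff_cong)
qed

lemma cycle_adj_reflect:
  assumes "a < k" "b < k"
  shows "cycle_adj k ((k - a) mod k) ((k - b) mod k) \<longleftrightarrow> cycle_adj k a b"
proof -
  have "[int ((k - y) mod k) = int ((k - x) mod k) + 1] (mod int k) \<longleftrightarrow>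
      [int x = int y + 1] (mod int k)" if "x < k" "y < k" for x y
  proof -
    have "[int ((k - y) mod k) = int ((k - x) mod k) + 1] (mod int k) \<longleftrightarrow>
        [- int y = - int x + 1] (mod int k)"
      using that by (intro cong_add_one_iff reflect_index_cong) auto
    also have "\<dots> \<longleftrightarrow> [int x = int y + 1] (mod int k)"
      by (simp add: cong_iff_dvd_diff algebra_simps)
    finally show ?thesis .
  qed
  then show ?thesis using assms by (auto simp add: cycle_adj_iff_cong)
qed

section \<open>Antiholes in terrain visibility graphs\<close>

definition antihole_embedding :: "'a set \<Rightarrow> ('a \<Rightarrow> 'a \<Rightarrow> bool) \<Rightarrow> nat \<Rightarrow> (nat \<Rightarrow> 'a) \<Rightarrow> bool" where
  "antihole_embedding W E k h \<longleftrightarrow> inj_on h {0..<k} \<and> h ` {0..<k} \<subseteq> W \<and>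
     (\<forall>i<k. \<forall>j<k. i \<noteq> j \<longrightarrow> (E (h i) (h j) \<longleftrightarrow> \<not> cycle_adj k i j))"

lemma has_induced_antihole_iff: "has_induced_antihole W E k \<longleftrightarrow> (\<exists>h. antihole_embedding W E k h)"
  unfolding has_induced_antihole_def antihole_embedding_def ..

lemma antihole_embedding_adj:
  "antihole_embedding W E k h \<Longrightarrow> i < k \<Longrightarrow> j < k \<Longrightarrow> i \<noteq> j \<Longrightarrow>
    E (h i) (h j) \<longleftrightarrow> \<not> cycle_adj k i j"
  unfolding antihole_embedding_def by blast

lemma antihole_embedding_transfer:
  assumes "antihole_embedding W E k h" "inj_on f W" "f ` W \<subseteq> W'"
    and "\<And>u v. u \<in> W \<Longrightarrow> v \<in> W \<Longrightarrow> u \<noteq> v \<Longrightarrow> E u v \<longleftrightarrow> E' (f u) (f v)"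
  shows "antihole_embedding W' E' k (f \<circ> h)"
proof -
  have inj: "inj_on h {0..<k}" and img: "h ` {0..<k} \<subseteq> W"
    using assms(1) by (simp_all add: antihole_embedding_def)
  have "E' (f (h i)) (f (h j)) \<longleftrightarrow> \<not> cycle_adj k i j" if "i < k" "j < k" "i \<noteq> j" for i j
  proof -
    have "h i \<noteq> h j" using inj that by (auto dest: inj_onD)
    moreover have "h i \<in> W" "h j \<in> W" using img that by auto
    ultimately show ?thesis using assms(4) antihole_embedding_adj[OF assms(1)] that img by auto
  qed
  moreover have "inj_on (f \<circ> h) {0..<k}" using inj img assms(2) comp_inj_on inj_on_subset by blast
  moreover have "(f \<circ> h) ` {0..<k} \<subseteq> W'" using img assms(3) by auto
  ultimately show ?thesis unfolding antihole_embedding_def by simp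
qed

lemma antihole_embedding_reindex:
  assumes "antihole_embedding W E k h" "inj_on \<pi> {0..<k}" "\<pi> ` {0..<k} \<subseteq> {0..<k}"
    and "\<And>i j. i < k \<Longrightarrow> j < k \<Longrightarrow> cycle_adj k (\<pi> i) (\<pi> j) \<longleftrightarrow> cycle_adj k i j"
  shows "antihole_embedding W E k (h \<circ> \<pi>)"
proof -
  have inj: "inj_on h {0..<k}" and img: "h ` {0..<k} \<subseteq> W"
    using assms(1) by (simp_all add: antihole_embedding_def)
  have "E (h (\<pi> i)) (h (\<pi> j)) \<longleftrightarrow> \<not> cycle_adj k i j" if "i < k" "j < k" "i \<noteq> j" for i j
  proof -
    have "\<pi> i \<noteq> \<pi> j" using assms(2) that by (auto dest: inj_onD)
    moreover have "\<pi> i < k" "\<pi> j < k" using assms(3) that by (auto simp: image_subset_iff)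
    ultimately show ?thesis using assms(4) antihole_embedding_adj[OF assms(1)] that by auto
  qed
  moreover have "inj_on (h \<circ> \<pi>) {0..<k}" using inj assms(2,3) comp_inj_on inj_on_subset by blast
  moreover have "(h \<circ> \<pi>) ` {0..<k} \<subseteq> W" using img assms(3) by auto
  ultimately show ?thesis unfolding antihole_embedding_def by simp
qed

lemma antihole_embedding_rotate:
  assumes "antihole_embedding W E k h"
  shows "antihole_embedding W E k (\<lambda>i. h ((c + i) mod k))"
proof -
  have "inj_on (\<lambda>i. (c + i) mod k) {0..<k}"
  proof (rule inj_onI)
    fix a b assume ab: "a \<in> {0..<k}" "b \<in> {0..<k}" and "(c + a) mod k = (c + b) mod k"
    then have "[a = b] (mod k)" by (simp add: cong_def [symmetric] cong_add_lcancel_nat)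
    then show "a = b" using ab cong_less_modulus_unique_nat by auto
  qed
  moreover have "(\<lambda>i. (c + i) mod k) ` {0..<k} \<subseteq> {0..<k}" by auto
  ultimately show ?thesis
    using antihole_embedding_reindex[OF assms _ _ cycle_adj_rotate] by (simp add: comp_def)
qed

lemma antihole_embedding_reflect:
  assumes "antihole_embedding W E k h"
  shows "antihole_embedding W E k (\<lambda>i. h ((k - i) mod k))"
proof -
  have "inj_on (\<lambda>i. (k - i) mod k) {0..<k}"
  proof (rule inj_onI)
    fix a b assume ab: "a \<in> {0..<k}" "b \<in> {0..<k}" and eq: "(k - a) mod k = (k - b) mod k"
    have "[int ((k - b) mod k) = - int a] (mod int k)"
      using reflect_index_cong[of a k] ab unfolding eq by simp
    moreover have "[int ((k - b) mod k) = - int b] (mod int k)"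
      using reflect_index_cong[of b k] ab by simp
    ultimately have "[- int a = - int b] (mod int k)"
      using cong_sym cong_trans by blast
    then have "[a = b] (mod k)" by (simp only: cong_minus_minus_iff cong_int_iff)
    then show "a = b" using ab cong_less_modulus_unique_nat by auto
  qed
  moreover have "(\<lambda>i. (k - i) mod k) ` {0..<k} \<subseteq> {0..<k}" by fastforce
  ultimately show ?thesis
    using antihole_embedding_reindex[OF assms _ _ cycle_adj_reflect] by (simp add: comp_def)
qed

context terrain_graph
begin

lemma antihole_fst_neq:
  assumes "antihole_embedding T E k V" "i < k" "j < k" "i \<noteq> j"
  shows "fst (V i) \<noteq> fst (V j)"
proof
  assume "fst (V i) = fst (V j)"
  moreover have "V i \<in> T" "V j \<in> T" using assms by (auto simp: antihole_embedding_def)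
  ultimately have "V i = V j" by (rule eq_if_fst_eq[rotated 2])
  then show False using assms by (auto simp: antihole_embedding_def dest: inj_onD)
qed

lemma antihole_leftmost_opposite:
  assumes V: "antihole_embedding T (tvis_edge T) k V" and "6 \<le> k"
    and leftmost: "\<And>j. j < k \<Longrightarrow> fst (V 0) \<le> fst (V j)"
  shows "fst (V (k - 1)) < fst (V 2)" and "fst (V 1) < fst (V (k - 2))"
proof -
  obtain m where k: "k = 6 + m" using \<open>6 \<le> k\<close> le_Suc_ex by blast
  have adj: "tvis_edge T (V i) (V j) \<longleftrightarrow> \<not> cycle_adj k i j" if "i < k" "j < k" "i \<noteq> j" for i j
    using antihole_embedding_adj[OF V that] .
  note fst_neq = antihole_fst_neq[OF V]
  have left: "fst (V 0) < fst (V j)" if "0 < j" "j < k" for j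
    using leftmost[OF that(2)] fst_neq[of 0 j] that by fastforce
  have "tvis_edge T (V 0) (V 2)" "tvis_edge T (V 2) (V (k - 1))" "tvis_edge T (V (k - 1)) (V 3)"
    "tvis_edge T (V 3) (V 0)" "\<not> tvis_edge T (V 0) (V (k - 1))" "\<not> tvis_edge T (V 2) (V 3)"
    by (simp_all add: adj k cycle_adj_def)
  moreover have "fst (V 0) < fst (V (k - 1))" "fst (V 0) < fst (V 2)" "fst (V 0) < fst (V 3)"
    "fst (V 2) \<noteq> fst (V 3)"
    by (simp_all add: left fst_neq k)
  ultimately show "fst (V (k - 1)) < fst (V 2)" by (rule induced_C4_opposite_left)
  have "tvis_edge T (V 0) (V (k - 2))" "tvis_edge T (V (k - 2)) (V 1)" "tvis_edge T (V 1) (V (k - 3))"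
    "tvis_edge T (V (k - 3)) (V 0)" "\<not> tvis_edge T (V 0) (V 1)" "\<not> tvis_edge T (V (k - 2)) (V (k - 3))"
    by (simp_all add: adj k cycle_adj_def)
  moreover have "fst (V 0) < fst (V 1)" "fst (V 0) < fst (V (k - 2))" "fst (V 0) < fst (V (k - 3))"
    "fst (V (k - 2)) \<noteq> fst (V (k - 3))"
    by (simp_all add: left fst_neq k)
  ultimately show "fst (V 1) < fst (V (k - 2))" by (rule induced_C4_opposite_left)
qed

lemma no_antihole_leftmost_first:
  assumes V: "antihole_embedding T (tvis_edge T) k V" and "6 \<le> k"
    and leftmost: "\<And>j. j < k \<Longrightarrow> fst (V 0) \<le> fst (V j)"
    and lt_1_km1: "fst (V 1) < fst (V (k - 1))"
  shows False
proof -
  obtain m where k: "k = 6 + m" using \<open>6 \<le> k\<close> le_Suc_ex by blast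
  have adj: "tvis_edge T (V i) (V j) \<longleftrightarrow> \<not> cycle_adj k i j" if "i < k" "j < k" "i \<noteq> j" for i j
    using antihole_embedding_adj[OF V that] .
  have edges: "tvis_edge T (V 1) (V (k - 1))" "tvis_edge T (V 1) (V (k - 2))"
    "tvis_edge T (V (k - 1)) (V 2)" "tvis_edge T (V (k - 2)) (V 2)" "tvis_edge T (V 0) (V (k - 2))"
    and non_edges: "\<not> tvis_edge T (V 0) (V (k - 1))" "\<not> tvis_edge T (V 1) (V 2)"
    "\<not> tvis_edge T (V (k - 1)) (V (k - 2))"
    by (simp_all add: adj k cycle_adj_def)
  have "fst (V 0) \<noteq> fst (V 1)" using antihole_fst_neq[OF V, of 0 1] k by simp
  with leftmost[of 1] have lt_0_1: "fst (V 0) < fst (V 1)" using k by simp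
  note lt_km1_2 = antihole_leftmost_opposite(1)[OF V \<open>6 \<le> k\<close> leftmost]
  note lt_1_km2 = antihole_leftmost_opposite(2)[OF V \<open>6 \<le> k\<close> leftmost]
  have lt_km1_km2: "fst (V (k - 1)) < fst (V (k - 2))"
  proof (rule ccontr)
    assume "\<not> ?thesis"
    moreover have "fst (V (k - 1)) \<noteq> fst (V (k - 2))" using antihole_fst_neq[OF V] k by simp
    ultimately have "fst (V (k - 2)) < fst (V (k - 1))" by simp
    then have "tvis_edge T (V 0) (V (k - 1))"
      using tvis_edge_crossing[OF lt_0_1 lt_1_km2 _ edges(5,1)] by blast
    then show False using non_edges(1) by contradiction
  qed
  consider "fst (V 2) < fst (V (k - 2))" | "fst (V (k - 2)) < fst (V 2)"
    using tvis_edge_fst_neq[OF edges(4)] by linarith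
  then show False
  proof cases
    case 1
    show False
      using no_ordered_induced_C4[OF lt_1_km1 lt_km1_2 1 edges(1,3) _ edges(2) non_edges(2,3)]
        tvis_edge_sym[THEN iffD1, OF edges(4)] by blast
  next
    case 2
    have "tvis_edge T (V 1) (V 2)"
      using tvis_edge_crossing[OF lt_1_km1 lt_km1_km2 2 edges(2,3)] .
    then show False using non_edges(2) by contradiction
  qed
qed

theorem no_antihole_embedding:
  assumes "6 \<le> k"
  shows "\<not> antihole_embedding T (tvis_edge T) k V"
proof
  assume V: "antihole_embedding T (tvis_edge T) k V"
  have "\<exists>x\<in>(\<lambda>i. fst (V i)) ` {0..<k}. \<not> (\<exists>y\<in>(\<lambda>i. fst (V i)) ` {0..<k}. y < x)"
    using \<open>6 \<le> k\<close> by (intro ex_min_if_finite) auto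
  then obtain i0 where "i0 < k" and i0_min: "\<And>j. j < k \<Longrightarrow> fst (V i0) \<le> fst (V j)"
    by (auto simp: not_less)
  define U where "U i = V ((i0 + i) mod k)" for i
  have U: "antihole_embedding T (tvis_edge T) k U"
    unfolding U_def by (rule antihole_embedding_rotate[OF V])
  have U_min: "fst (U 0) \<le> fst (U j)" if "j < k" for j
    unfolding U_def using i0_min \<open>i0 < k\<close> that by simp
  define U' where "U' i = U ((k - i) mod k)" for i
  have U': "antihole_embedding T (tvis_edge T) k U'"
    unfolding U'_def by (rule antihole_embedding_reflect[OF U])
  have U'_min: "fst (U' 0) \<le> fst (U' j)" if "j < k" for j
    unfolding U'_def using U_min that by simp
  have "fst (U 1) \<noteq> fst (U (k - 1))" using antihole_fst_neq[OF U] \<open>6 \<le> k\<close> by simp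
  then consider "fst (U 1) < fst (U (k - 1))" | "fst (U' 1) < fst (U' (k - 1))"
    unfolding U'_def using \<open>6 \<le> k\<close> by fastforce
  then show False
    using no_antihole_leftmost_first[OF U \<open>6 \<le> k\<close> U_min]
      no_antihole_leftmost_first[OF U' \<open>6 \<le> k\<close> U'_min] by cases
qed

end

theorem theorem5:
  fixes W :: "'a set" and E :: "'a \<Rightarrow> 'a \<Rightarrow> bool" and k :: nat
  assumes "terrain_visibility_graph W E"
    and "k \<ge> 6"
  shows "\<not> has_induced_antihole W E k"
proof
  assume "has_induced_antihole W E k"
  then obtain h where h: "antihole_embedding W E k h" by (auto simp: has_induced_antihole_iff)
  obtain T f where "terrain T" and f: "bij_betw f W T"
    and E: "\<And>u v. u \<in> W \<Longrightarrow> v \<in> W \<Longrightarrow> u \<noteq> v \<Longrightarrow> E u v \<longleftrightarrow> tvis_edge T (f u) (f v)"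
    using assms(1) unfolding terrain_visibility_graph_def by blast
  have "antihole_embedding T (tvis_edge T) k (f \<circ> h)"
    using antihole_embedding_transfer[OF h bij_betw_imp_inj_on[OF f] _ E] bij_betw_imp_surj_on[OF f]
    by blast
  then show False
    using terrain_graph.no_antihole_embedding[OF terrain_graph.intro[OF \<open>terrain T\<close>] assms(2)] by blast
qed

end
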